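(* Let $M\subset\mathbb{R}^m$ be a polyhedral complex and $f:|M|\to\mathbb{R}^n$ a piecewise-linear map which is affine on each cell of $M$. Let $N$ be a polyhedral complex embedded in $\mathbb{R}^n$. Suppose $f$ is transverse on cells of $M$ to the interior of every cell of $N$. If $C\le C'$ is a face relation in $M$, $D\le D'$ is a face relation in $N$, and $f(C^\circ)\cap D$ is nonempty, then $f(C'^\circ)\cap D'^\circ$ is nonempty.
   Context: Polyhedra are intersections of finitely many closed half-spaces (possibly unbounded); $P^\circ$ denotes the interior of $P$ relative to its affine span (a point is its own interior). $C\le C'$ means $C$ is a face of $C'$ or equal to it. A polyhedral complex is a finite set of polyhedra closed under taking faces such that any two members intersect in a common face; $|M|$ is the union of its cells. A map $f$ affine on each cell of $M$ is transverse on cells of $M$ to a smooth submanifold $Z$ (without boundary) if for every cell $C$ of $M$, the restriction $f|_{C^\circ}$ is transverse to $Z$, i.e. for every $x\in C^\circ$ with $f(x)\in Z$, $df(T_xC^\circ)+T_{f(x)}Z=\mathbb{R}^n$. *)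

theory Defs
  imports "HOL-Analysis.Analysis"
begin

text \<open>Faces are the library notion face_of; the empty set is a face of everything.\<close>
definition polyhedral_complex :: "'a::euclidean_space set set \<Rightarrow> bool" where
  "polyhedral_complex M \<longleftrightarrow>
     finite M \<and>
     (\<forall>C\<in>M. polyhedron C) \<and>
     (\<forall>C\<in>M. \<forall>F. F face_of C \<and> F \<noteq> {} \<longrightarrow> F \<in> M) \<and>
     (\<forall>C\<in>M. \<forall>C'\<in>M. (C \<inter> C') face_of C \<and> (C \<inter> C') face_of C')"

definition affine_on :: "'a::real_vector set \<Rightarrow> ('a \<Rightarrow> 'b::real_vector) \<Rightarrow> bool" where
  "affine_on C f \<longleftrightarrow> (\<exists>g c. linear g \<and> (\<forall>x\<in>C. f x = g x + c))"

text \<open>Tangent space at x of (the relative interior of) a convex set S containing x: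
  the linear subspace parallel to the affine hull of S.\<close>
definition tangent_space :: "'a::real_vector set \<Rightarrow> 'a \<Rightarrow> 'a set" where
  "tangent_space S x = span ((\<lambda>y. y - x) ` S)"

definition transverse_on_cells ::
  "'a::euclidean_space set set \<Rightarrow> ('a \<Rightarrow> 'b::euclidean_space) \<Rightarrow> 'b set \<Rightarrow> bool" where
  "transverse_on_cells M f D \<longleftrightarrow>
     (\<forall>C\<in>M. \<forall>x\<in>rel_interior C. f x \<in> rel_interior D \<longrightarrow>
        (\<exists>g. linear g \<and> (\<forall>y\<in>C. f y = f x + g (y - x)) \<and>
             {u + v | u v. u \<in> g ` tangent_space C x \<and> v \<in> tangent_space D (f x)} = UNIV))"

end

theory Submission
  imports Defs
begin

text \<open>Pick x in the relative interior of C with f x in D, and let E be the face of D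
  with f x in its relative interior. On C' the map f is affine with some linear part h,
  and transversality at x to the relative interior of E says that h(T_x C) + T_{f x} E
  is the whole space. Choose c in the relative interior of C' and z in that of D',
  and split z - f x - h(c - x) = h u + v with u tangent to C and v tangent to E.
  For small r > 0 we have x + r u in C and f x - r v in E; shrinking these two points
  towards c and z by the factor s = r / (1 + r) lands in the relative interiors of C'
  and D', and since (1 - s) r = s, f maps the first shrunken point to the second.\<close>

lemma polyhedron_mem_rel_interior_face:
  fixes S :: "'a::euclidean_space set"
  assumes "polyhedron S" "p \<in> S"
  obtains F where "F face_of S" "p \<in> rel_interior F"
  using assms
proof (induction "nat (aff_dim S + 1)" arbitrary: S rule: less_induct)
  case less
  show ?case
  proof (cases "p \<in> rel_interior S")
    case True
    then show ?thesis
      using less.prems face_of_refl polyhedron_imp_convex by blast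
  next
    case False
    then obtain F where F: "F facet_of S" "p \<in> F"
      using less.prems rel_interior_of_polyhedron by blast
    then have "F face_of S"
      by (simp add: facet_of_def)
    have "nat (aff_dim F + 1) < nat (aff_dim S + 1)"
      using F aff_dim_geq[of F] by (auto simp: facet_of_def)
    then show ?thesis
      using less.hyps[of F] less.prems F \<open>F face_of S\<close>
      by (meson face_of_polyhedron_polyhedron face_of_trans)
  qed
qed

lemma polyhedral_complex_mem_rel_interior_cell:
  assumes "polyhedral_complex N" "D \<in> N" "p \<in> D"
  obtains E where "E \<in> N" "E face_of D" "p \<in> rel_interior E"
proof -
  have "polyhedron D"
    using assms(1,2) by (simp add: polyhedral_complex_def)
  then obtain E where "E face_of D" "p \<in> rel_interior E"
    using polyhedron_mem_rel_interior_face assms(3) by blast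
  moreover have "E \<noteq> {}"
    using \<open>p \<in> rel_interior E\<close> rel_interior_subset by blast
  ultimately have "E \<in> N"
    using assms(1,2) by (simp add: polyhedral_complex_def)
  then show ?thesis
    using that \<open>E face_of D\<close> \<open>p \<in> rel_interior E\<close> by blast
qed

lemma tangent_space_imp_mem_affine_hull:
  fixes S :: "'a::real_vector set"
  assumes "a \<in> S" "u \<in> tangent_space S a"
  shows "a + u \<in> affine hull S"
proof -
  have "(\<lambda>y. y - a) ` S = insert 0 ((\<lambda>y. - a + y) ` (S - {a}))"
    using assms(1) by auto
  then show ?thesis
    using assms affine_hull_span2[OF assms(1)] by (auto simp: tangent_space_def)
qed

lemma rel_interior_tangent_step:
  fixes S :: "'a::euclidean_space set"
  assumes "a \<in> rel_interior S" "u \<in> tangent_space S a"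
  shows "\<exists>e>0. \<forall>r. \<bar>r\<bar> < e \<longrightarrow> a + r *\<^sub>R u \<in> S"
proof -
  obtain e where "e > 0" and e: "ball a e \<inter> affine hull S \<subseteq> S" "a \<in> S"
    using assms(1) mem_rel_interior_ball by blast
  define d where "d = e / (norm u + 1)"
  have "d > 0"
    using \<open>e > 0\<close> by (simp add: d_def add_nonneg_pos)
  moreover have "a + r *\<^sub>R u \<in> S" if "\<bar>r\<bar> < d" for r
  proof -
    have "r *\<^sub>R u \<in> tangent_space S a"
      using assms(2) by (simp add: tangent_space_def span_mul)
    then have "a + r *\<^sub>R u \<in> affine hull S"
      using e(2) tangent_space_imp_mem_affine_hull by blast
    moreover have "\<bar>r\<bar> * norm u < e"
    proof -
      have "\<bar>r\<bar> * norm u \<le> d * norm u"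
        using that by (simp add: mult_right_mono)
      also have "\<dots> < e"
        using \<open>e > 0\<close> by (simp add: d_def divide_less_eq add_nonneg_pos)
      finally show ?thesis .
    qed
    ultimately show ?thesis
      using e(1) by (auto simp: dist_norm)
  qed
  ultimately show ?thesis
    by blast
qed

lemma affine_on_imp_linear_part:
  assumes "affine_on S f" "x \<in> S"
  obtains h where "linear h" "\<And>y. y \<in> S \<Longrightarrow> f y = f x + h (y - x)"
proof -
  obtain h c where h: "linear h" and hc: "\<And>y. y \<in> S \<Longrightarrow> f y = h y + c"
    using assms(1) unfolding affine_on_def by blast
  have "f y = f x + h (y - x)" if "y \<in> S" for y
    using hc[OF that] hc[OF assms(2)] by (simp add: linear_diff[OF h])
  then show ?thesis
    using that h by blast
qed

lemma linear_image_tangent_space_eq: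
  assumes "linear g" "linear h" "\<And>y. y \<in> S \<Longrightarrow> g (y - x) = h (y - x)"
  shows "g ` tangent_space S x = h ` tangent_space S x"
proof (rule image_cong[OF refl])
  show "g w = h w" if "w \<in> tangent_space S x" for w
    using that unfolding tangent_space_def
    by (rule linear_eq_on_span[OF assms(1,2), rotated]) (use assms(3) in blast)
qed

lemma transverse_linear_map_meets_rel_interiors:
  fixes h :: "'a::euclidean_space \<Rightarrow> 'b::euclidean_space"
  assumes "linear h"
    and "convex A'" "A \<subseteq> A'" "a \<in> rel_interior A"
    and "convex B'" "B \<subseteq> B'" "b \<in> rel_interior B"
    and transverse: "{u + v | u v. u \<in> h ` tangent_space A a \<and> v \<in> tangent_space B b} = UNIV"
  shows "\<exists>y \<in> rel_interior A'. b + h (y - a) \<in> rel_interior B'"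
proof -
  obtain c where c: "c \<in> rel_interior A'"
    using assms(2-4) rel_interior_eq_empty rel_interior_subset by blast
  obtain z where z: "z \<in> rel_interior B'"
    using assms(5-7) rel_interior_eq_empty rel_interior_subset by blast
  obtain u v where u: "u \<in> tangent_space A a" and v: "v \<in> tangent_space B b"
    and uv: "z - b - h (c - a) = h u + v"
    using transverse by blast
  have "- v \<in> tangent_space B b"
    using v by (simp add: tangent_space_def span_neg)
  then obtain e2 where "e2 > 0" and e2: "\<And>r. \<bar>r\<bar> < e2 \<Longrightarrow> b + r *\<^sub>R - v \<in> B"
    using rel_interior_tangent_step assms(7) by blast
  obtain e1 where "e1 > 0" and e1: "\<And>r. \<bar>r\<bar> < e1 \<Longrightarrow> a + r *\<^sub>R u \<in> A"
    using rel_interior_tangent_step assms(4) u by blast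
  define r where "r = min e1 e2 / 2"
  have "r > 0" "\<bar>r\<bar> < e1" "\<bar>r\<bar> < e2"
    using \<open>e1 > 0\<close> \<open>e2 > 0\<close> by (auto simp: r_def)
  then have "a + r *\<^sub>R u \<in> A'" "b - r *\<^sub>R v \<in> B'"
    using e1 e2 assms(3,6) by auto
  define s where "s = r / (1 + r)"
  have "0 < s" "s \<le> 1" "(1 - s) * r = s"
    using \<open>r > 0\<close> by (auto simp: s_def field_simps)
  define y where "y = (a + r *\<^sub>R u) - s *\<^sub>R ((a + r *\<^sub>R u) - c)"
  have "y \<in> rel_interior A'"
    unfolding y_def using rel_interior_closure_convex_shrink assms(2) c \<open>0 < s\<close> \<open>s \<le> 1\<close>
      \<open>a + r *\<^sub>R u \<in> A'\<close> closure_subset by blast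
  moreover have "(b - r *\<^sub>R v) - s *\<^sub>R ((b - r *\<^sub>R v) - z) \<in> rel_interior B'"
    using rel_interior_closure_convex_shrink assms(5) z \<open>0 < s\<close> \<open>s \<le> 1\<close>
      \<open>b - r *\<^sub>R v \<in> B'\<close> closure_subset by blast
  moreover have "b + h (y - a) = (b - r *\<^sub>R v) - s *\<^sub>R ((b - r *\<^sub>R v) - z)"
  proof -
    have "y - a = ((1 - s) * r) *\<^sub>R u + s *\<^sub>R (c - a)"
      by (simp add: y_def algebra_simps)
    then have "b + h (y - a) = b + s *\<^sub>R (h u + h (c - a))"
      unfolding \<open>(1 - s) * r = s\<close> using \<open>linear h\<close>
      by (simp add: linear_add linear_scale scaleR_add_right)
    also have "\<dots> = b - s *\<^sub>R v - s *\<^sub>R b + s *\<^sub>R z"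
      using uv by (simp add: algebra_simps)
    also have "\<dots> = (b - r *\<^sub>R v) - s *\<^sub>R ((b - r *\<^sub>R v) - z)"
      by (subst (1) \<open>(1 - s) * r = s\<close>[symmetric]) (simp add: algebra_simps)
    finally show ?thesis .
  qed
  ultimately show ?thesis
    by (metis (no_types))
qed

theorem lemma17:
  fixes M :: "'a::euclidean_space set set"
    and N :: "'b::euclidean_space set set"
    and f :: "'a \<Rightarrow> 'b"
  assumes "polyhedral_complex M"
    and "polyhedral_complex N"
    and "\<forall>C\<in>M. affine_on C f"
    and "\<forall>D\<in>N. transverse_on_cells M f D"
    and "C \<in> M" and "C' \<in> M" and "C face_of C'"
    and "D \<in> N" and "D' \<in> N" and "D face_of D'"
    and "f ` rel_interior C \<inter> D \<noteq> {}"
  shows "f ` rel_interior C' \<inter> rel_interior D' \<noteq> {}"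
proof -
  obtain x where x: "x \<in> rel_interior C" "f x \<in> D"
    using assms(11) by blast
  obtain E where "E \<in> N" "E face_of D" and E: "f x \<in> rel_interior E"
    using polyhedral_complex_mem_rel_interior_cell[OF assms(2,8) x(2)] by blast
  then have "transverse_on_cells M f E"
    using assms(4) by blast
  then obtain g where "linear g" and g: "\<And>y. y \<in> C \<Longrightarrow> f y = f x + g (y - x)"
    and transverse: "{u + v | u v. u \<in> g ` tangent_space C x \<and> v \<in> tangent_space E (f x)} = UNIV"
    using assms(5) x(1) E unfolding transverse_on_cells_def by meson
  have "C \<subseteq> C'" "x \<in> C'"
    using assms(7) x(1) face_of_imp_subset rel_interior_subset by blast+
  then obtain h where "linear h" and h: "\<And>y. y \<in> C' \<Longrightarrow> f y = f x + h (y - x)"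
    using affine_on_imp_linear_part[of C' f x] assms(3,6) by blast
  have "g (y - x) = h (y - x)" if "y \<in> C" for y
    using g[OF that] h[of y] that \<open>C \<subseteq> C'\<close> by auto
  then have "g ` tangent_space C x = h ` tangent_space C x"
    by (rule linear_image_tangent_space_eq[OF \<open>linear g\<close> \<open>linear h\<close>])
  then have transverse_h:
    "{u + v | u v. u \<in> h ` tangent_space C x \<and> v \<in> tangent_space E (f x)} = UNIV"
    using transverse by simp
  have "convex C'" "convex D'"
    using assms(1,2,6,9) polyhedron_imp_convex by (auto simp: polyhedral_complex_def)
  moreover have "E \<subseteq> D'"
    using \<open>E face_of D\<close> assms(10) face_of_trans face_of_imp_subset by blast
  ultimately have "\<exists>y \<in> rel_interior C'. f x + h (y - x) \<in> rel_interior D'"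
    by (intro transverse_linear_map_meets_rel_interiors[OF \<open>linear h\<close> _ \<open>C \<subseteq> C'\<close> x(1) _ _ E transverse_h])
  then obtain y where y: "y \<in> rel_interior C'" "f x + h (y - x) \<in> rel_interior D'"
    by blast
  have "f y = f x + h (y - x)"
    using h[of y] y(1) rel_interior_subset by auto
  with y(2) have "f y \<in> rel_interior D'"
    by simp
  with y(1) show ?thesis
    by blast
qed

end
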